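(* For every integer $n \ge 2$, $$\chi_{2K_2}(P_n) \ge \sqrt{2\left\lceil \frac{n-1}{3} \right\rceil + \frac14} + \frac12.$$
   Context: All graphs are finite and simple. For a fixed bipartite graph $H$, a proper vertex coloring of a graph $G$ is called an $H$-avoiding coloring if for any two color classes, the subgraph of $G$ induced by their union contains no induced subgraph isomorphic to $H$. $\chi_H(G)$ denotes the minimum number of colors in an $H$-avoiding coloring of $G$. $P_n$ is the path on $n$ vertices and $2K_2$ is the disjoint union of two edges. *)

theory Defs
  imports Complex_Main
begin

definition simple_graph :: "'a set \<Rightarrow> ('a \<Rightarrow> 'a \<Rightarrow> bool) \<Rightarrow> bool" where
  "simple_graph V E \<longleftrightarrow> finite V \<and>
     (\<forall>x y. E x y \<longrightarrow> x \<in> V \<and> y \<in> V \<and> x \<noteq> y \<and> E y x)"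

definition has_induced_copy ::
  "'b set \<Rightarrow> ('b \<Rightarrow> 'b \<Rightarrow> bool) \<Rightarrow> 'a set \<Rightarrow> ('a \<Rightarrow> 'a \<Rightarrow> bool) \<Rightarrow> bool" where
  "has_induced_copy VH EH S E \<longleftrightarrow>
     (\<exists>f. inj_on f VH \<and> f ` VH \<subseteq> S \<and>
          (\<forall>u\<in>VH. \<forall>v\<in>VH. EH u v \<longleftrightarrow> E (f u) (f v)))"

definition proper_coloring :: "'a set \<Rightarrow> ('a \<Rightarrow> 'a \<Rightarrow> bool) \<Rightarrow> nat \<Rightarrow> ('a \<Rightarrow> nat) \<Rightarrow> bool" where
  "proper_coloring V E k c \<longleftrightarrow>
     (\<forall>v\<in>V. c v < k) \<and> (\<forall>u\<in>V. \<forall>v\<in>V. E u v \<longrightarrow> c u \<noteq> c v)"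

definition H_avoiding_coloring ::
  "'b set \<Rightarrow> ('b \<Rightarrow> 'b \<Rightarrow> bool) \<Rightarrow> 'a set \<Rightarrow> ('a \<Rightarrow> 'a \<Rightarrow> bool) \<Rightarrow> nat \<Rightarrow> ('a \<Rightarrow> nat) \<Rightarrow> bool" where
  "H_avoiding_coloring VH EH V E k c \<longleftrightarrow>
     proper_coloring V E k c \<and>
     (\<forall>i j. i \<noteq> j \<longrightarrow> \<not> has_induced_copy VH EH {v\<in>V. c v = i \<or> c v = j} E)"

definition chi_H ::
  "'b set \<Rightarrow> ('b \<Rightarrow> 'b \<Rightarrow> bool) \<Rightarrow> 'a set \<Rightarrow> ('a \<Rightarrow> 'a \<Rightarrow> bool) \<Rightarrow> nat" where
  "chi_H VH EH V E = (LEAST k. \<exists>c. H_avoiding_coloring VH EH V E k c)"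

definition path_V :: "nat \<Rightarrow> nat set" where
  "path_V n = {0..<n}"

definition path_E :: "nat \<Rightarrow> nat \<Rightarrow> nat \<Rightarrow> bool" where
  "path_E n i j \<longleftrightarrow> i < n \<and> j < n \<and> (i + 1 = j \<or> j + 1 = i)"

definition twoK2_V :: "nat set" where
  "twoK2_V = {0, 1, 2, 3}"

definition twoK2_E :: "nat \<Rightarrow> nat \<Rightarrow> bool" where
  "twoK2_E i j \<longleftrightarrow> {i, j} = {0, 1} \<or> {i, j} = {2, 3::nat}"

end

theory Submission
  imports Defs
begin

text \<open>In a 2K_2-avoiding colouring of P_n with k colours, each of the n - 1 edges carries a
pair of distinct colours. Two edges carrying the same pair {i, j} at distance at least three
form an induced 2K_2 inside the union of the colour classes i and j, so every pair is carried
by at most three edges. Hence n - 1 \<le> 3 * (k choose 2), and solving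
\<lceil>(n - 1) / 3\<rceil> \<le> k (k - 1) / 2 for k gives the bound.\<close>

lemma card_le_if_pairwise_lt_add:
  fixes X :: "nat set"
  assumes "finite X" and close: "\<And>x y. x \<in> X \<Longrightarrow> y \<in> X \<Longrightarrow> y < x + d"
  shows "card X \<le> d"
proof (cases "X = {}")
  case False
  let ?m = "Min X"
  have "X \<subseteq> {?m..<?m + d}"
    using close[OF Min_in[OF \<open>finite X\<close> False]] Min_le[OF \<open>finite X\<close>] by auto
  then show ?thesis
    using card_mono[of "{?m..<?m + d}" X] by simp
qed simp

lemma card_le_mult_if_fibres_bounded:
  assumes "finite B" "f ` A \<subseteq> B" and fibre: "\<And>b. b \<in> B \<Longrightarrow> card {a \<in> A. f a = b} \<le> d"
  shows "card A \<le> d * card B"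
proof -
  have "A = (\<Union>b\<in>B. {a \<in> A. f a = b})"
    using assms(2) by auto
  then have "card A \<le> (\<Sum>b\<in>B. card {a \<in> A. f a = b})"
    using card_UN_le[OF \<open>finite B\<close>] by metis
  also have "\<dots> \<le> (\<Sum>b\<in>B. d)"
    by (rule sum_mono) (rule fibre)
  finally show ?thesis
    by (simp add: mult.commute)
qed

lemma injective_coloring_is_H_avoiding:
  assumes "proper_coloring V E k c" "inj_on c V" "card VH > 2"
  shows "H_avoiding_coloring VH EH V E k c"
proof -
  have "\<not> has_induced_copy VH EH {v \<in> V. c v = i \<or> c v = j} E" for i j
  proof
    let ?S = "{v \<in> V. c v = i \<or> c v = j}"
    assume "has_induced_copy VH EH ?S E"
    then obtain f where f: "inj_on f VH" "f ` VH \<subseteq> ?S"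
      unfolding has_induced_copy_def by blast
    have inj_S: "inj_on c ?S"
      using \<open>inj_on c V\<close> by (rule inj_on_subset) auto
    have "c ` ?S \<subseteq> {i, j}"
      by auto
    then have fin_S: "finite ?S"
      using finite_imageD[OF _ inj_S] finite_subset by blast
    have "card ?S = card (c ` ?S)"
      using card_image[OF inj_S] by simp
    also have "\<dots> \<le> card {i, j}"
      using \<open>c ` ?S \<subseteq> {i, j}\<close> by (intro card_mono) auto
    also have "\<dots> \<le> 2"
      by (simp add: card_insert_le_m1)
    finally have "card ?S \<le> 2" .
    moreover have "card (f ` VH) \<le> card ?S"
      using card_mono[OF fin_S f(2)] .
    ultimately show False
      using \<open>card VH > 2\<close> card_image[OF f(1)] by simp
  qed
  with assms(1) show ?thesis
    unfolding H_avoiding_coloring_def by blast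
qed

lemma chi_H_attained:
  assumes "H_avoiding_coloring VH EH V E k c"
  obtains c' where "H_avoiding_coloring VH EH V E (chi_H VH EH V E) c'"
  using LeastI_ex[of "\<lambda>k. \<exists>c. H_avoiding_coloring VH EH V E k c"] assms
  unfolding chi_H_def by blast

lemma path_has_induced_twoK2:
  assumes "a + 3 \<le> b" "b + 1 < n" "{a, a + 1, b, b + 1} \<subseteq> S"
  shows "has_induced_copy twoK2_V twoK2_E S (path_E n)"
proof -
  define f where "f u = (if u = 0 then a else if u = 1 then a + 1 else if u = 2 then b else b + 1)"
    for u :: nat
  have "inj_on f twoK2_V"
    using assms(1) unfolding inj_on_def f_def twoK2_V_def by auto
  moreover have "f ` twoK2_V \<subseteq> S"
    using assms(3) unfolding f_def twoK2_V_def by auto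
  moreover have "\<forall>u\<in>twoK2_V. \<forall>v\<in>twoK2_V. twoK2_E u v \<longleftrightarrow> path_E n (f u) (f v)"
    using assms(1,2) unfolding f_def twoK2_V_def twoK2_E_def path_E_def
    by (auto simp: doubleton_eq_iff)
  ultimately show ?thesis
    unfolding has_induced_copy_def by blast
qed

lemma twoK2_avoiding_path_colour_pair_card:
  assumes avoiding: "H_avoiding_coloring twoK2_V twoK2_E (path_V n) (path_E n) k c" and "i \<noteq> j"
  shows "card {a \<in> {0..<n - 1}. {c a, c (a + 1)} = {i, j}} \<le> 3"
proof (rule card_le_if_pairwise_lt_add)
  fix a b
  assume a: "a \<in> {a \<in> {0..<n - 1}. {c a, c (a + 1)} = {i, j}}"
    and b: "b \<in> {a \<in> {0..<n - 1}. {c a, c (a + 1)} = {i, j}}"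
  show "b < a + 3"
  proof (rule ccontr)
    assume "\<not> b < a + 3"
    moreover have "{a, a + 1, b, b + 1} \<subseteq> {v \<in> path_V n. c v = i \<or> c v = j}"
      using a b unfolding path_V_def by (auto simp: doubleton_eq_iff)
    ultimately have "has_induced_copy twoK2_V twoK2_E {v \<in> path_V n. c v = i \<or> c v = j} (path_E n)"
      using b by (intro path_has_induced_twoK2[of a b]) auto
    with avoiding \<open>i \<noteq> j\<close> show False
      unfolding H_avoiding_coloring_def by blast
  qed
qed simp

lemma twoK2_avoiding_path_edges_le:
  assumes avoiding: "H_avoiding_coloring twoK2_V twoK2_E (path_V n) (path_E n) k c"
  shows "n - 1 \<le> 3 * (k choose 2)"
proof -
  let ?pairs = "{S. S \<subseteq> {0..<k} \<and> card S = 2}"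
  have "\<And>v. v < n \<Longrightarrow> c v < k" and "\<And>v. v + 1 < n \<Longrightarrow> c v \<noteq> c (v + 1)"
    using avoiding unfolding H_avoiding_coloring_def proper_coloring_def path_V_def path_E_def
    by auto
  then have "(\<lambda>a. {c a, c (a + 1)}) ` {0..<n - 1} \<subseteq> ?pairs"
    by auto
  moreover have "card {a \<in> {0..<n - 1}. {c a, c (a + 1)} = S} \<le> 3" if "S \<in> ?pairs" for S
    using that twoK2_avoiding_path_colour_pair_card[OF avoiding]
    by (auto simp: card_2_iff)
  ultimately have "card {0..<n - 1} \<le> 3 * card ?pairs"
    by (intro card_le_mult_if_fibres_bounded) auto
  then show ?thesis
    by (simp add: n_subsets)
qed

lemma sqrt_bound_of_le_choose_2:
  fixes k :: nat and r :: real
  assumes "k \<ge> 1" "r \<le> real (k choose 2)"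
  shows "sqrt (2 * r + 1 / 4) + 1 / 2 \<le> real k"
proof -
  have "real (k choose 2) = real k * (real k - 1) / 2"
    by (cases k) (auto simp: choose_two real_of_nat_div algebra_simps)
  then have "2 * r + 1 / 4 \<le> (real k - 1 / 2)\<^sup>2"
    using assms(2) by (simp add: power2_eq_square algebra_simps)
  then have "sqrt (2 * r + 1 / 4) \<le> real k - 1 / 2"
    using assms(1) real_sqrt_le_mono[of "2 * r + 1 / 4" "(real k - 1 / 2)\<^sup>2"] by simp
  then show ?thesis
    by simp
qed

theorem corollary1:
  fixes n :: nat
  assumes "n \<ge> 2"
  shows "real (chi_H twoK2_V twoK2_E (path_V n) (path_E n))
           \<ge> sqrt (2 * real_of_int \<lceil>(real n - 1) / 3\<rceil> + 1 / 4) + 1 / 2"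
proof -
  let ?k = "chi_H twoK2_V twoK2_E (path_V n) (path_E n)"
  have "proper_coloring (path_V n) (path_E n) n id"
    unfolding proper_coloring_def path_V_def path_E_def by auto
  then have "H_avoiding_coloring twoK2_V twoK2_E (path_V n) (path_E n) n id"
    by (rule injective_coloring_is_H_avoiding) (auto simp: twoK2_V_def)
  then obtain c where c: "H_avoiding_coloring twoK2_V twoK2_E (path_V n) (path_E n) ?k c"
    by (rule chi_H_attained)
  have "c 0 < ?k"
    using c assms unfolding H_avoiding_coloring_def proper_coloring_def path_V_def by auto
  moreover have "n - 1 \<le> 3 * (?k choose 2)"
    using c by (rule twoK2_avoiding_path_edges_le)
  then have "real n - 1 \<le> 3 * real (?k choose 2)"
    using assms by (simp add: of_nat_diff flip: of_nat_le_iff)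
  then have "(real n - 1) / 3 \<le> real (?k choose 2)"
    by simp
  then have "real_of_int \<lceil>(real n - 1) / 3\<rceil> \<le> real (?k choose 2)"
    by (metis ceiling_le_iff of_int_of_nat_eq of_int_le_iff)
  ultimately show ?thesis
    by (intro sqrt_bound_of_le_choose_2) auto
qed

end
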